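(* Impose (A1)–(A6) and (A8), and fix $x\in\mathcal X$, $u\in[0,1]$. Then $\underline{\Delta}(x,u)\le\Delta^{OO}_{Y^*}(x,u)\le\overline{\Delta}(x,u)$, where: (i) under (A7.1): $\underline\Delta(x,u)=\underline y^*-\frac{m_0^Y(x,u)}{m_0^S(x,u)}$ and $\overline\Delta(x,u)=\frac{m_1^Y(x,u)-\underline y^*\Delta_S(x,u)}{m_0^S(x,u)}-\frac{m_0^Y(x,u)}{m_0^S(x,u)}$; (ii) under (A7.2): $\underline\Delta(x,u)=\frac{m_1^Y(x,u)-\overline y^*\Delta_S(x,u)}{m_0^S(x,u)}-\frac{m_0^Y(x,u)}{m_0^S(x,u)}$ and $\overline\Delta(x,u)=\overline y^*-\frac{m_0^Y(x,u)}{m_0^S(x,u)}$; (iii) under (A7.3) (sub-case (a) or (b)): $\underline\Delta(x,u)=\max\left\{\frac{m_1^Y(x,u)-\overline y^*\Delta_S(x,u)}{m_0^S(x,u)},\underline y^*\right\}-\frac{m_0^Y(x,u)}{m_0^S(x,u)}$ and $\overline\Delta(x,u)=\min\left\{\frac{m_1^Y(x,u)-\underline y^*\Delta_S(x,u)}{m_0^S(x,u)},\overline y^*\right\}-\frac{m_0^Y(x,u)}{m_0^S(x,u)}$.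
   Context: Standing setup. On a common probability space: $X$ (covariates, support $\mathcal X$), $Z$ (instrument, support $\mathcal Z$), $W=(X,Z)$; latent real random variables $U,V$, jointly continuously distributed conditional on $X$, with $U\mid X$ and $V\mid X$ each Uniform$[0,1]$ (their joint dependence unrestricted); real potential outcomes of interest $Y_0^*,Y_1^*$. Given functions $P:\mathcal X\times\mathcal Z\to[0,1]$ and $Q:\{0,1\}\times\mathcal X\to[0,1]$, define the treatment $D=\mathbf 1\{P(W)\ge U\}$, potential selection indicators $S_d=\mathbf 1\{Q(d,X)\ge V\}$ ($d\in\{0,1\}$), selection indicator $S=DS_1+(1-D)S_0$, potential observable outcomes $Y_d=S_dY_d^*$ and observable outcome $Y=DY_1+(1-D)Y_0$. For $x\in\mathcal X$, $u\in[0,1]$, $d\in\{0,1\}$: $m_d^Y(x,u)=\mathbb E[Y_d\mid X=x,U=u]$, $m_d^S(x,u)=\mathbb E[S_d\mid X=x,U=u]$, $\Delta_S(x,u)=m_1^S(x,u)-m_0^S(x,u)$, and $\Delta^{OO}_{Y^*}(x,u)=\mathbb E[Y_1^*-Y_0^*\mid X=x,U=u,S_0=1,S_1=1]$. Ratios appearing are assumed well defined (nonzero denominators). Assumptions: (A1) $Z$ is independent of $(U,V,Y_0^*,Y_1^* )$ conditional on $X$; (A2) the distribution of $P(W)$ given $X$ is nondegenerate; (A3) $\mathbb E|Y_d^*|<\infty$ and $\mathbb E[(Y_d^* )^2]<\infty$ for $d=0,1$; (A4) $0<\mathbb P[D=1\mid X]<1$; (A5) $X$ is invariant to counterfactual manipulation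 of treatment; (A6) $Y_0^*$ and $Y_1^*$ have a common support $\mathcal Y^*\subseteq\mathbb R$; write $\underline y^*=\inf\mathcal Y^*\in\mathbb R\cup\{-\infty\}$ and $\overline y^*=\sup\mathcal Y^*\in\mathbb R\cup\{+\infty\}$, assumed known. Support cases: (A7.1) $\underline y^*>-\infty$, $\overline y^*=+\infty$, $\mathcal Y^*$ an interval; (A7.2) $\underline y^*=-\infty$, $\overline y^*<\infty$, $\mathcal Y^*$ an interval; (A7.3) $\underline y^*,\overline y^*$ both finite and either (a) $\mathcal Y^*$ is an interval or (b) $\underline y^*\in\mathcal Y^*$ and $\overline y^*\in\mathcal Y^*$. (A8) $Q(1,x)>Q(0,x)>0$ for all $x\in\mathcal X$. *)

theory Defs
  imports "HOL-Probability.Probability"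
begin

definition condE :: "'a measure \<Rightarrow> ('a \<Rightarrow> 'x) \<Rightarrow> 'x measure \<Rightarrow> ('a \<Rightarrow> real) \<Rightarrow> 'a \<Rightarrow> real" where
  "condE M X SX f = real_cond_exp M (vimage_algebra (space M) X SX) f"

definition condP :: "'a measure \<Rightarrow> ('a \<Rightarrow> 'x) \<Rightarrow> 'x measure \<Rightarrow> 'a set \<Rightarrow> 'a \<Rightarrow> real" where
  "condP M X SX A = condE M X SX (indicator A)"

definition cond_indep_given ::
  "'a measure \<Rightarrow> ('a \<Rightarrow> 'x) \<Rightarrow> 'x measure \<Rightarrow> ('a \<Rightarrow> 'z) \<Rightarrow> 'z measure
    \<Rightarrow> ('a \<Rightarrow> 'w) \<Rightarrow> 'w measure \<Rightarrow> bool" where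
  "cond_indep_given M X SX Z SZ W SW \<longleftrightarrow>
     (\<forall>A\<in>sets SZ. \<forall>B\<in>sets SW. AE \<omega> in M.
        condP M X SX ({\<omega>\<in>space M. Z \<omega> \<in> A} \<inter> {\<omega>\<in>space M. W \<omega> \<in> B}) \<omega>
        = condP M X SX {\<omega>\<in>space M. Z \<omega> \<in> A} \<omega> * condP M X SX {\<omega>\<in>space M. W \<omega> \<in> B} \<omega>)"

definition cond_nondegenerate :: "'a measure \<Rightarrow> ('a \<Rightarrow> 'x) \<Rightarrow> 'x measure \<Rightarrow> ('a \<Rightarrow> real) \<Rightarrow> bool" where
  "cond_nondegenerate M X SX R \<longleftrightarrow>
     (AE \<omega> in M. condE M X SX (\<lambda>\<omega>'. (R \<omega>' - condE M X SX R \<omega>')\<^sup>2) \<omega> > 0)"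

definition cond_uniform01 :: "'a measure \<Rightarrow> ('a \<Rightarrow> 'x) \<Rightarrow> 'x measure \<Rightarrow> ('a \<Rightarrow> real) \<Rightarrow> bool" where
  "cond_uniform01 M X SX R \<longleftrightarrow>
     (\<forall>t\<in>{0..1}. AE \<omega> in M. condP M X SX {\<omega>\<in>space M. R \<omega> \<le> t} \<omega> = t)"

definition cond_jointly_continuous ::
  "'a measure \<Rightarrow> ('a \<Rightarrow> 'x) \<Rightarrow> 'x measure \<Rightarrow> ('a \<Rightarrow> real) \<Rightarrow> ('a \<Rightarrow> real) \<Rightarrow> bool" where
  "cond_jointly_continuous M X SX U V \<longleftrightarrow>
     (\<forall>N\<in>null_sets (lborel :: (real \<times> real) measure).
        AE \<omega> in M. condP M X SX {\<omega>\<in>space M. (U \<omega>, V \<omega>) \<in> N} \<omega> = 0)"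

definition rv_support :: "'a measure \<Rightarrow> ('a \<Rightarrow> real) \<Rightarrow> real set" where
  "rv_support M Y = {y. \<forall>e>0. measure M {\<omega>\<in>space M. \<bar>Y \<omega> - y\<bar> < e} > 0}"

definition is_rcd :: "'a measure \<Rightarrow> ('a \<Rightarrow> 'x) \<Rightarrow> 'x measure \<Rightarrow> ('a \<Rightarrow> real)
    \<Rightarrow> ('x \<Rightarrow> real \<Rightarrow> 'a measure) \<Rightarrow> bool" where
  "is_rcd M X SX U K \<longleftrightarrow>
     (\<forall>x u. sets (K x u) = sets M \<and> prob_space (K x u)) \<and>
     (\<forall>A\<in>sets M. (\<lambda>(x, u). measure (K x u) A) \<in> borel_measurable (SX \<Otimes>\<^sub>M borel)) \<and>
     (\<forall>A\<in>sets M. \<forall>B\<in>sets (SX \<Otimes>\<^sub>M borel).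
        measure M ({\<omega>\<in>space M. (X \<omega>, U \<omega>) \<in> B} \<inter> A)
        = (\<integral>\<omega>. indicator B (X \<omega>, U \<omega>) * measure (K (X \<omega>) (U \<omega>)) A \<partial>M))"

definition Ssel :: "(nat \<Rightarrow> 'x \<Rightarrow> real) \<Rightarrow> ('a \<Rightarrow> 'x) \<Rightarrow> ('a \<Rightarrow> real) \<Rightarrow> nat \<Rightarrow> 'a \<Rightarrow> real" where
  "Ssel Q X V d \<omega> = (if V \<omega> \<le> Q d (X \<omega>) then 1 else 0)"

definition Dtr :: "('x \<Rightarrow> 'z \<Rightarrow> real) \<Rightarrow> ('a \<Rightarrow> 'x) \<Rightarrow> ('a \<Rightarrow> 'z) \<Rightarrow> ('a \<Rightarrow> real) \<Rightarrow> 'a \<Rightarrow> real" where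
  "Dtr P X Z U \<omega> = (if U \<omega> \<le> P (X \<omega>) (Z \<omega>) then 1 else 0)"

text \<open>m_d^Y(x,u) = E[Y_d | X=x,U=u] with Y_d = S_d Y_d^*.\<close>
definition mY :: "('x \<Rightarrow> real \<Rightarrow> 'a measure) \<Rightarrow> (nat \<Rightarrow> 'x \<Rightarrow> real) \<Rightarrow> ('a \<Rightarrow> 'x) \<Rightarrow> ('a \<Rightarrow> real)
    \<Rightarrow> nat \<Rightarrow> ('a \<Rightarrow> real) \<Rightarrow> 'x \<Rightarrow> real \<Rightarrow> real" where
  "mY K Q X V d Ystar_d x u = (\<integral>\<omega>. Ssel Q X V d \<omega> * Ystar_d \<omega> \<partial>(K x u))"

definition mS :: "('x \<Rightarrow> real \<Rightarrow> 'a measure) \<Rightarrow> (nat \<Rightarrow> 'x \<Rightarrow> real) \<Rightarrow> ('a \<Rightarrow> 'x) \<Rightarrow> ('a \<Rightarrow> real)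
    \<Rightarrow> nat \<Rightarrow> 'x \<Rightarrow> real \<Rightarrow> real" where
  "mS K Q X V d x u = (\<integral>\<omega>. Ssel Q X V d \<omega> \<partial>(K x u))"

definition pOO :: "('x \<Rightarrow> real \<Rightarrow> 'a measure) \<Rightarrow> (nat \<Rightarrow> 'x \<Rightarrow> real) \<Rightarrow> ('a \<Rightarrow> 'x) \<Rightarrow> ('a \<Rightarrow> real)
    \<Rightarrow> 'x \<Rightarrow> real \<Rightarrow> real" where
  "pOO K Q X V x u = (\<integral>\<omega>. Ssel Q X V 0 \<omega> * Ssel Q X V 1 \<omega> \<partial>(K x u))"

definition DeltaOO :: "('x \<Rightarrow> real \<Rightarrow> 'a measure) \<Rightarrow> (nat \<Rightarrow> 'x \<Rightarrow> real) \<Rightarrow> ('a \<Rightarrow> 'x) \<Rightarrow> ('a \<Rightarrow> real)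
    \<Rightarrow> ('a \<Rightarrow> real) \<Rightarrow> ('a \<Rightarrow> real) \<Rightarrow> 'x \<Rightarrow> real \<Rightarrow> real" where
  "DeltaOO K Q X V Y0s Y1s x u =
     (\<integral>\<omega>. (Y1s \<omega> - Y0s \<omega>) * Ssel Q X V 0 \<omega> * Ssel Q X V 1 \<omega> \<partial>(K x u)) / pOO K Q X V x u"

end

theory Submission
  imports Defs
begin

text \<open>Under (A8) selection is monotone, \<open>S\<^sub>0 \<le> S\<^sub>1\<close>, so the always-observed stratum
  \<open>S\<^sub>0 = S\<^sub>1 = 1\<close> is just \<open>S\<^sub>0 = 1\<close> and, given \<open>(X, U) = (x, u)\<close>,
  \<open>\<Delta>\<^sup>O\<^sup>O = E[S\<^sub>0 Y\<^sub>1\<^sup>*] / m\<^sub>0\<^sup>S - m\<^sub>0\<^sup>Y / m\<^sub>0\<^sup>S\<close>. Only \<open>E[S\<^sub>0 Y\<^sub>1\<^sup>*]\<close> is unidentified.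
  As \<open>Y\<^sub>1\<^sup>*\<close> lies almost surely in its support, a bound \<open>c \<le> Y\<^sub>1\<^sup>*\<close> gives
  \<open>c m\<^sub>0\<^sup>S \<le> E[S\<^sub>0 Y\<^sub>1\<^sup>*] \<le> m\<^sub>1\<^sup>Y - c \<Delta>\<^sub>S\<close>, since \<open>m\<^sub>1\<^sup>Y - E[S\<^sub>0 Y\<^sub>1\<^sup>*] = E[(S\<^sub>1 - S\<^sub>0) Y\<^sub>1\<^sup>*]\<close>,
  and symmetrically for an upper bound; the three cases combine these one-sided bounds.
  Almost-sure facts and integrability pass from \<open>M\<close> to almost every kernel measure
  \<open>K (X \<omega>) (U \<omega>)\<close> because integrating the kernel gives back \<open>M\<close>.\<close>

context prob_space
begin

lemma closed_rv_support:
  assumes [measurable]: "Y \<in> borel_measurable M"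
  shows "closed (rv_support M Y)"
  unfolding closed_def open_dist
proof (intro ballI)
  fix y assume "y \<in> - rv_support M Y"
  then obtain e where e: "e > 0" and null: "measure M {\<omega>\<in>space M. \<bar>Y \<omega> - y\<bar> < e} \<le> 0"
    by (auto simp: rv_support_def not_less)
  have "y' \<notin> rv_support M Y" if "dist y' y < e / 2" for y'
  proof -
    have "{\<omega>\<in>space M. \<bar>Y \<omega> - y'\<bar> < e / 2} \<subseteq> {\<omega>\<in>space M. \<bar>Y \<omega> - y\<bar> < e}"
      using that by (auto simp: dist_real_def abs_if split: if_splits)
    then have "measure M {\<omega>\<in>space M. \<bar>Y \<omega> - y'\<bar> < e / 2}
        \<le> measure M {\<omega>\<in>space M. \<bar>Y \<omega> - y\<bar> < e}"
      by (intro finite_measure_mono) auto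
    then show ?thesis using e null by (auto simp: rv_support_def not_less intro!: exI[of _ "e / 2"])
  qed
  then show "\<exists>e>0. \<forall>y'. dist y' y < e \<longrightarrow> y' \<in> - rv_support M Y"
    using e by (auto intro!: exI[of _ "e / 2"])
qed

lemma AE_in_rv_support:
  assumes [measurable]: "Y \<in> borel_measurable M"
  shows "AE \<omega> in M. Y \<omega> \<in> rv_support M Y"
proof -
  have null_ball: "AE \<omega> in M. \<not> \<bar>Y \<omega> - q\<bar> < r"
    if "measure M {\<omega>\<in>space M. \<bar>Y \<omega> - q\<bar> < r} = 0" for q r
    using that by (subst AE_iff_measurable[of "{\<omega>\<in>space M. \<bar>Y \<omega> - q\<bar> < r}"])
      (auto simp: emeasure_eq_measure)
  have "AE \<omega> in M. \<forall>q r :: rat.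
      measure M {\<omega>\<in>space M. \<bar>Y \<omega> - of_rat q\<bar> < of_rat r} = 0 \<longrightarrow> \<not> \<bar>Y \<omega> - of_rat q\<bar> < of_rat r"
    by (intro AE_all_countable[THEN iffD2] allI AE_impI null_ball)
  then show ?thesis
  proof eventually_elim
    case (elim \<omega>)
    show ?case unfolding rv_support_def
    proof (intro CollectI allI impI)
      fix e :: real assume "e > 0"
      obtain q where q: "Y \<omega> - e / 2 < of_rat q" "of_rat q < Y \<omega>"
        using \<open>e > 0\<close> Rats_dense_in_real[of "Y \<omega> - e / 2" "Y \<omega>"] by (auto elim: Rats_cases)
      obtain r where r: "\<bar>Y \<omega> - of_rat q\<bar> < of_rat r" "of_rat r < e / 2"
        using q Rats_dense_in_real[of "\<bar>Y \<omega> - of_rat q\<bar>" "e / 2"] by (auto elim: Rats_cases)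
      have "{\<omega>'\<in>space M. \<bar>Y \<omega>' - of_rat q\<bar> < of_rat r} \<subseteq> {\<omega>'\<in>space M. \<bar>Y \<omega>' - Y \<omega>\<bar> < e}"
        using r by (auto simp: abs_less_iff)
      then have "measure M {\<omega>'\<in>space M. \<bar>Y \<omega>' - of_rat q\<bar> < of_rat r}
          \<le> measure M {\<omega>'\<in>space M. \<bar>Y \<omega>' - Y \<omega>\<bar> < e}"
        by (intro finite_measure_mono) auto
      moreover have "0 < measure M {\<omega>'\<in>space M. \<bar>Y \<omega>' - of_rat q\<bar> < of_rat r}"
        unfolding zero_less_measure_iff using elim r by blast
      ultimately show "measure M {\<omega>'\<in>space M. \<bar>Y \<omega>' - Y \<omega>\<bar> < e} > 0"
        by linarith
    qed
  qed
qed

end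

lemma is_rcd_sets: "is_rcd M X SX U K \<Longrightarrow> sets (K x u) = sets M"
  and is_rcd_prob_space: "is_rcd M X SX U K \<Longrightarrow> prob_space (K x u)"
  unfolding is_rcd_def by auto

lemma is_rcd_emeasure_eq_measure:
  assumes "is_rcd M X SX U K"
  shows "emeasure (K x u) A = measure (K x u) A"
proof -
  interpret prob_space "K x u" using assms by (rule is_rcd_prob_space)
  show ?thesis by (rule emeasure_eq_measure)
qed

lemma finite_measure_is_rcd: "is_rcd M X SX U K \<Longrightarrow> finite_measure (K x u)"
  using is_rcd_prob_space by (rule prob_space.axioms(1))

lemma space_is_rcd: "is_rcd M X SX U K \<Longrightarrow> space (K x u) = space M"
  using is_rcd_sets by (rule sets_eq_imp_space_eq)

lemma measurable_is_rcd: "is_rcd M X SX U K \<Longrightarrow> f \<in> measurable M N \<Longrightarrow> f \<in> measurable (K x u) N"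
  by (simp add: measurable_cong_sets[OF is_rcd_sets refl])

lemma is_rcd_measurable_subprob_algebra:
  assumes X: "X \<in> measurable M SX" and U: "U \<in> borel_measurable M"
    and K: "is_rcd M X SX U K"
  shows "(\<lambda>\<omega>. K (X \<omega>) (U \<omega>)) \<in> measurable M (subprob_algebra M)"
proof (rule measurable_subprob_algebra)
  fix \<omega>
  show "subprob_space (K (X \<omega>) (U \<omega>))"
    using is_rcd_prob_space[OF K] by (rule prob_space_imp_subprob_space)
  show "sets (K (X \<omega>) (U \<omega>)) = sets M" using K by (rule is_rcd_sets)
next
  fix A assume "A \<in> sets M"
  then have "(\<lambda>(x, u). measure (K x u) A) \<in> borel_measurable (SX \<Otimes>\<^sub>M borel)"
    using K unfolding is_rcd_def by blast
  from measurable_compose[OF measurable_Pair[OF X U] this]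
  show "(\<lambda>\<omega>. emeasure (K (X \<omega>) (U \<omega>)) A) \<in> borel_measurable M"
    by (simp add: is_rcd_emeasure_eq_measure[OF K])
qed

lemma measure_eq_integral_is_rcd:
  assumes X: "X \<in> measurable M SX" and U: "U \<in> borel_measurable M"
    and K: "is_rcd M X SX U K" and A: "A \<in> sets M"
  shows "measure M A = (\<integral>\<omega>. measure (K (X \<omega>) (U \<omega>)) A \<partial>M)"
proof -
  have XU_space: "(X \<omega>, U \<omega>) \<in> space (SX \<Otimes>\<^sub>M borel)" if "\<omega> \<in> space M" for \<omega>
    using measurable_space[OF measurable_Pair[OF X U] that] .
  have "measure M ({\<omega>\<in>space M. (X \<omega>, U \<omega>) \<in> space (SX \<Otimes>\<^sub>M borel)} \<inter> A)
      = (\<integral>\<omega>. indicator (space (SX \<Otimes>\<^sub>M borel)) (X \<omega>, U \<omega>) * measure (K (X \<omega>) (U \<omega>)) A \<partial>M)"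
    using K A unfolding is_rcd_def by blast
  also have "{\<omega>\<in>space M. (X \<omega>, U \<omega>) \<in> space (SX \<Otimes>\<^sub>M borel)} \<inter> A = A"
    using XU_space sets.sets_into_space[OF A] by auto
  also have "(\<integral>\<omega>. indicator (space (SX \<Otimes>\<^sub>M borel)) (X \<omega>, U \<omega>) * measure (K (X \<omega>) (U \<omega>)) A \<partial>M)
      = (\<integral>\<omega>. measure (K (X \<omega>) (U \<omega>)) A \<partial>M)"
    using XU_space by (intro Bochner_Integration.integral_cong) auto
  finally show ?thesis .
qed

lemma is_rcd_bind_eq:
  assumes M: "prob_space M" and X: "X \<in> measurable M SX" and U: "U \<in> borel_measurable M"
    and K: "is_rcd M X SX U K"
  shows "M \<bind> (\<lambda>\<omega>. K (X \<omega>) (U \<omega>)) = M"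
proof -
  interpret prob_space M by (rule M)
  let ?\<kappa> = "\<lambda>\<omega>. K (X \<omega>) (U \<omega>)"
  note \<kappa>_meas = is_rcd_measurable_subprob_algebra[OF X U K]
  show ?thesis
  proof (rule measure_eqI)
    show sets_eq: "sets (M \<bind> ?\<kappa>) = sets M"
      using is_rcd_sets[OF K] not_empty by (rule sets_bind)
    fix A assume "A \<in> sets (M \<bind> ?\<kappa>)"
    then have A: "A \<in> sets M" by (simp add: sets_eq)
    have "(\<lambda>\<omega>. measure (?\<kappa> \<omega>) A) \<in> borel_measurable M"
      using measurable_emeasure_kernel[OF \<kappa>_meas A] by (simp add: measure_def)
    then have integrable: "integrable M (\<lambda>\<omega>. measure (?\<kappa> \<omega>) A)"
      by (intro integrable_const_bound[where B = 1])
        (auto simp: prob_space.prob_le_1[OF is_rcd_prob_space[OF K]])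
    have "emeasure (M \<bind> ?\<kappa>) A = (\<integral>\<^sup>+\<omega>. ennreal (measure (?\<kappa> \<omega>) A) \<partial>M)"
      using A \<kappa>_meas by (simp add: emeasure_bind[OF not_empty] is_rcd_emeasure_eq_measure[OF K])
    also have "\<dots> = ennreal (\<integral>\<omega>. measure (?\<kappa> \<omega>) A \<partial>M)"
      using integrable by (rule nn_integral_eq_integral) simp
    finally show "emeasure (M \<bind> ?\<kappa>) A = emeasure M A"
      by (simp add: measure_eq_integral_is_rcd[OF X U K A, symmetric] emeasure_eq_measure)
  qed
qed

lemma AE_is_rcd:
  assumes M: "prob_space M" and X: "X \<in> measurable M SX" and U: "U \<in> borel_measurable M"
    and K: "is_rcd M X SX U K"
    and P: "Measurable.pred M P" and ae: "AE \<omega> in M. P \<omega>"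
  shows "AE \<omega> in M. AE \<omega>' in K (X \<omega>) (U \<omega>). P \<omega>'"
proof -
  have "AE \<omega> in M \<bind> (\<lambda>\<omega>. K (X \<omega>) (U \<omega>)). P \<omega>"
    by (subst is_rcd_bind_eq[OF M X U K]) (rule ae)
  then show ?thesis by (simp add: AE_bind[OF is_rcd_measurable_subprob_algebra[OF X U K] P])
qed

lemma integrable_is_rcd:
  fixes f :: "'a \<Rightarrow> real"
  assumes M: "prob_space M" and X: "X \<in> measurable M SX" and U: "U \<in> borel_measurable M"
    and K: "is_rcd M X SX U K" and f: "integrable M f"
  shows "AE \<omega> in M. integrable (K (X \<omega>) (U \<omega>)) f"
proof -
  note \<kappa>_meas = is_rcd_measurable_subprob_algebra[OF X U K]
  have f_meas: "f \<in> borel_measurable M" using f by simp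
  have norm_meas: "(\<lambda>y. ennreal (norm (f y))) \<in> borel_measurable M" using f_meas by measurable
  have "(\<integral>\<^sup>+\<omega>. \<integral>\<^sup>+y. ennreal (norm (f y)) \<partial>K (X \<omega>) (U \<omega>) \<partial>M) = (\<integral>\<^sup>+y. ennreal (norm (f y)) \<partial>M)"
    using nn_integral_bind[OF norm_meas \<kappa>_meas] by (simp add: is_rcd_bind_eq[OF M X U K])
  also have "\<dots> < \<infinity>" using f by (simp add: integrable_iff_bounded)
  finally have "AE \<omega> in M. (\<integral>\<^sup>+y. ennreal (norm (f y)) \<partial>K (X \<omega>) (U \<omega>)) \<noteq> \<infinity>"
    using measurable_compose[OF \<kappa>_meas nn_integral_measurable_subprob_algebra[OF norm_meas]]
    by (intro nn_integral_PInf_AE) auto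
  then show ?thesis
  proof eventually_elim
    case (elim \<omega>)
    from measurable_is_rcd[OF K f_meas] show ?case
      using elim by (simp add: integrable_iff_bounded top.not_eq_extremum)
  qed
qed

lemma AE_is_rcd_rv_support:
  assumes M: "prob_space M" and X: "X \<in> measurable M SX" and U: "U \<in> borel_measurable M"
    and K: "is_rcd M X SX U K" and Y: "Y \<in> borel_measurable M"
  shows "AE \<omega> in M. AE \<omega>' in K (X \<omega>) (U \<omega>). Y \<omega>' \<in> rv_support M Y"
proof (rule AE_is_rcd[OF M X U K])
  show "Measurable.pred M (\<lambda>\<omega>. Y \<omega> \<in> rv_support M Y)"
    using borel_closed[OF prob_space.closed_rv_support[OF M Y]] Y by (rule pred_sets2)
  show "AE \<omega> in M. Y \<omega> \<in> rv_support M Y"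
    using M Y by (rule prob_space.AE_in_rv_support)
qed

lemma integrable_bounded_weight_mult:
  fixes w Y :: "'a \<Rightarrow> real"
  assumes [measurable]: "w \<in> borel_measurable N"
    and w_bounded: "\<And>\<omega>. \<omega> \<in> space N \<Longrightarrow> \<bar>w \<omega>\<bar> \<le> 1" and Y: "integrable N Y"
  shows "integrable N (\<lambda>\<omega>. w \<omega> * Y \<omega>)"
proof (rule Bochner_Integration.integrable_bound[OF Y])
  show "(\<lambda>\<omega>. w \<omega> * Y \<omega>) \<in> borel_measurable N" using Y by measurable
  show "AE \<omega> in N. norm (w \<omega> * Y \<omega>) \<le> norm (Y \<omega>)"
    using w_bounded by (intro AE_I2) (simp add: abs_mult mult_left_le_one_le)
qed

lemma integral_weight_mult_lower_bound:
  fixes w Y :: "'a \<Rightarrow> real"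
  assumes N: "finite_measure N" and [measurable]: "w \<in> borel_measurable N"
    and w: "\<And>\<omega>. \<omega> \<in> space N \<Longrightarrow> 0 \<le> w \<omega> \<and> w \<omega> \<le> 1"
    and Y: "integrable N Y" and lower: "AE \<omega> in N. c \<le> Y \<omega>"
  shows "c * (\<integral>\<omega>. w \<omega> \<partial>N) \<le> (\<integral>\<omega>. w \<omega> * Y \<omega> \<partial>N)"
proof -
  interpret finite_measure N by (rule N)
  have "(\<integral>\<omega>. w \<omega> * c \<partial>N) \<le> (\<integral>\<omega>. w \<omega> * Y \<omega> \<partial>N)"
  proof (rule integral_mono_AE)
    have "integrable N w" by (intro integrable_const_bound[where B = 1] AE_I2) (auto dest: w)
    then show "integrable N (\<lambda>\<omega>. w \<omega> * c)" by simp
    show "integrable N (\<lambda>\<omega>. w \<omega> * Y \<omega>)"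
      using w by (auto intro!: integrable_bounded_weight_mult Y)
    show "AE \<omega> in N. w \<omega> * c \<le> w \<omega> * Y \<omega>"
      using lower AE_space by eventually_elim (simp add: w mult_left_mono)
  qed
  then show ?thesis by (simp add: mult.commute)
qed

lemma nested_weights_mean_bounds_lower:
  fixes s0 s1 Y :: "'a \<Rightarrow> real"
  assumes N: "finite_measure N"
    and [measurable]: "s0 \<in> borel_measurable N" "s1 \<in> borel_measurable N"
    and nested: "\<forall>\<omega>\<in>space N. 0 \<le> s0 \<omega> \<and> s0 \<omega> \<le> s1 \<omega> \<and> s1 \<omega> \<le> 1"
    and Y: "integrable N Y" and lower: "AE \<omega> in N. c \<le> Y \<omega>"
    and pos: "0 < (\<integral>\<omega>. s0 \<omega> \<partial>N)"
  shows "c \<le> (\<integral>\<omega>. s0 \<omega> * Y \<omega> \<partial>N) / (\<integral>\<omega>. s0 \<omega> \<partial>N)"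
    and "(\<integral>\<omega>. s0 \<omega> * Y \<omega> \<partial>N) / (\<integral>\<omega>. s0 \<omega> \<partial>N)
      \<le> ((\<integral>\<omega>. s1 \<omega> * Y \<omega> \<partial>N) - c * ((\<integral>\<omega>. s1 \<omega> \<partial>N) - (\<integral>\<omega>. s0 \<omega> \<partial>N))) / (\<integral>\<omega>. s0 \<omega> \<partial>N)"
proof -
  interpret finite_measure N by (rule N)
  have bounded: "\<bar>s \<omega>\<bar> \<le> 1" if "s \<in> {s0, s1}" "\<omega> \<in> space N" for s \<omega>
    using nested that by auto
  have int_sZ: "integrable N (\<lambda>\<omega>. s \<omega> * Z \<omega>)" if "s \<in> {s0, s1}" "integrable N Z" for s Z
    using that bounded by (auto intro!: integrable_bounded_weight_mult)
  have int_s: "integrable N s" if "s \<in> {s0, s1}" for s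
    using int_sZ[OF that, of "\<lambda>_. 1"] by simp
  have "c * (\<integral>\<omega>. s0 \<omega> \<partial>N) \<le> (\<integral>\<omega>. s0 \<omega> * Y \<omega> \<partial>N)"
    by (intro integral_weight_mult_lower_bound[OF N _ _ Y lower]) (use nested in auto)
  then show "c \<le> (\<integral>\<omega>. s0 \<omega> * Y \<omega> \<partial>N) / (\<integral>\<omega>. s0 \<omega> \<partial>N)"
    using pos by (simp add: pos_le_divide_eq)
  have "c * (\<integral>\<omega>. s1 \<omega> - s0 \<omega> \<partial>N) \<le> (\<integral>\<omega>. (s1 \<omega> - s0 \<omega>) * Y \<omega> \<partial>N)"
    by (intro integral_weight_mult_lower_bound[OF N _ _ Y lower]) (use nested in auto)
  then have "(\<integral>\<omega>. s0 \<omega> * Y \<omega> \<partial>N)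
      \<le> (\<integral>\<omega>. s1 \<omega> * Y \<omega> \<partial>N) - c * ((\<integral>\<omega>. s1 \<omega> \<partial>N) - (\<integral>\<omega>. s0 \<omega> \<partial>N))"
    using int_s int_sZ[OF _ Y] by (simp add: left_diff_distrib)
  then show "(\<integral>\<omega>. s0 \<omega> * Y \<omega> \<partial>N) / (\<integral>\<omega>. s0 \<omega> \<partial>N)
      \<le> ((\<integral>\<omega>. s1 \<omega> * Y \<omega> \<partial>N) - c * ((\<integral>\<omega>. s1 \<omega> \<partial>N) - (\<integral>\<omega>. s0 \<omega> \<partial>N))) / (\<integral>\<omega>. s0 \<omega> \<partial>N)"
    using pos by (simp add: divide_right_mono)
qed

lemma nested_weights_mean_bounds_upper:
  fixes s0 s1 Y :: "'a \<Rightarrow> real"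
  assumes N: "finite_measure N"
    and s_meas: "s0 \<in> borel_measurable N" "s1 \<in> borel_measurable N"
    and nested: "\<forall>\<omega>\<in>space N. 0 \<le> s0 \<omega> \<and> s0 \<omega> \<le> s1 \<omega> \<and> s1 \<omega> \<le> 1"
    and Y: "integrable N Y" and upper: "AE \<omega> in N. Y \<omega> \<le> C"
    and pos: "0 < (\<integral>\<omega>. s0 \<omega> \<partial>N)"
  shows "(\<integral>\<omega>. s0 \<omega> * Y \<omega> \<partial>N) / (\<integral>\<omega>. s0 \<omega> \<partial>N) \<le> C"
    and "((\<integral>\<omega>. s1 \<omega> * Y \<omega> \<partial>N) - C * ((\<integral>\<omega>. s1 \<omega> \<partial>N) - (\<integral>\<omega>. s0 \<omega> \<partial>N))) / (\<integral>\<omega>. s0 \<omega> \<partial>N)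
      \<le> (\<integral>\<omega>. s0 \<omega> * Y \<omega> \<partial>N) / (\<integral>\<omega>. s0 \<omega> \<partial>N)"
proof -
  have "AE \<omega> in N. - C \<le> - Y \<omega>" using upper by eventually_elim simp
  note bounds = nested_weights_mean_bounds_lower[OF N s_meas nested integrable_minus[OF Y] this pos]
  have neg: "(\<integral>\<omega>. s \<omega> * - Y \<omega> \<partial>N) = - (\<integral>\<omega>. s \<omega> * Y \<omega> \<partial>N)" for s
    by simp
  have "- C * (\<integral>\<omega>. s0 \<omega> \<partial>N) \<le> - (\<integral>\<omega>. s0 \<omega> * Y \<omega> \<partial>N)"
    using bounds(1) unfolding neg pos_le_divide_eq[OF pos] .
  then show "(\<integral>\<omega>. s0 \<omega> * Y \<omega> \<partial>N) / (\<integral>\<omega>. s0 \<omega> \<partial>N) \<le> C"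
    unfolding pos_divide_le_eq[OF pos] by simp
  have "- (\<integral>\<omega>. s0 \<omega> * Y \<omega> \<partial>N)
      \<le> - (\<integral>\<omega>. s1 \<omega> * Y \<omega> \<partial>N) - - C * ((\<integral>\<omega>. s1 \<omega> \<partial>N) - (\<integral>\<omega>. s0 \<omega> \<partial>N))"
    using bounds(2) pos unfolding neg divide_le_cancel by blast
  then show "((\<integral>\<omega>. s1 \<omega> * Y \<omega> \<partial>N) - C * ((\<integral>\<omega>. s1 \<omega> \<partial>N) - (\<integral>\<omega>. s0 \<omega> \<partial>N))) / (\<integral>\<omega>. s0 \<omega> \<partial>N)
      \<le> (\<integral>\<omega>. s0 \<omega> * Y \<omega> \<partial>N) / (\<integral>\<omega>. s0 \<omega> \<partial>N)"
    using pos by (intro divide_right_mono) simp_all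
qed

lemma measurable_Ssel:
  assumes "X \<in> measurable M SX" "V \<in> borel_measurable M" "Q d \<in> borel_measurable SX"
  shows "Ssel Q X V d \<in> borel_measurable M"
  unfolding Ssel_def using assms by measurable

lemma mS_nonneg: "0 \<le> mS K Q X V d x u"
  unfolding mS_def by (intro integral_nonneg_AE AE_I2) (simp add: Ssel_def)

lemma Ssel_nested_weights:
  assumes "\<And>\<omega>. \<omega> \<in> A \<Longrightarrow> Q 0 (X \<omega>) \<le> Q 1 (X \<omega>)"
  shows "\<forall>\<omega>\<in>A. 0 \<le> Ssel Q X V 0 \<omega> \<and> Ssel Q X V 0 \<omega> \<le> Ssel Q X V 1 \<omega> \<and> Ssel Q X V 1 \<omega> \<le> 1"
  by (auto simp: Ssel_def dest: assms)

lemma DeltaOO_nested_selection: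
  assumes [measurable]: "Ssel Q X V 0 \<in> borel_measurable (K x u)"
    and nested: "\<And>\<omega>. \<omega> \<in> space (K x u) \<Longrightarrow> Q 0 (X \<omega>) \<le> Q 1 (X \<omega>)"
    and Y0: "integrable (K x u) Y0s" and Y1: "integrable (K x u) Y1s"
  shows "DeltaOO K Q X V Y0s Y1s x u
    = (\<integral>\<omega>. Ssel Q X V 0 \<omega> * Y1s \<omega> \<partial>K x u) / mS K Q X V 0 x u - mY K Q X V 0 Y0s x u / mS K Q X V 0 x u"
proof -
  let ?s0 = "Ssel Q X V 0" and ?s1 = "Ssel Q X V 1"
  have bounded: "\<bar>?s0 \<omega>\<bar> \<le> 1" for \<omega> by (simp add: Ssel_def)
  have "pOO K Q X V x u = mS K Q X V 0 x u"
    unfolding pOO_def mS_def by (intro Bochner_Integration.integral_cong) (auto simp: Ssel_def dest: nested)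
  moreover have "(\<integral>\<omega>. (Y1s \<omega> - Y0s \<omega>) * ?s0 \<omega> * ?s1 \<omega> \<partial>K x u)
      = (\<integral>\<omega>. ?s0 \<omega> * Y1s \<omega> - ?s0 \<omega> * Y0s \<omega> \<partial>K x u)"
    by (intro Bochner_Integration.integral_cong) (auto simp: Ssel_def dest: nested)
  moreover have "\<dots> = (\<integral>\<omega>. ?s0 \<omega> * Y1s \<omega> \<partial>K x u) - mY K Q X V 0 Y0s x u"
    unfolding mY_def using bounded Y0 Y1
    by (intro Bochner_Integration.integral_diff integrable_bounded_weight_mult) auto
  ultimately show ?thesis unfolding DeltaOO_def by (simp add: diff_divide_distrib)
qed

lemma DeltaOO_bounds_of_lower_bound:
  assumes K: "is_rcd M X SX U K"
    and S_meas: "Ssel Q X V 0 \<in> borel_measurable M" "Ssel Q X V 1 \<in> borel_measurable M"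
    and nested: "\<And>\<omega>. \<omega> \<in> space M \<Longrightarrow> Q 0 (X \<omega>) \<le> Q 1 (X \<omega>)"
    and Y0: "integrable (K x u) Y0s" and Y1: "integrable (K x u) Y1s"
    and lower: "AE \<omega> in K x u. c \<le> Y1s \<omega>" and m0: "mS K Q X V 0 x u \<noteq> 0"
  shows "c - mY K Q X V 0 Y0s x u / mS K Q X V 0 x u \<le> DeltaOO K Q X V Y0s Y1s x u"
    and "DeltaOO K Q X V Y0s Y1s x u
      \<le> (mY K Q X V 1 Y1s x u - c * (mS K Q X V 1 x u - mS K Q X V 0 x u)) / mS K Q X V 0 x u
        - mY K Q X V 0 Y0s x u / mS K Q X V 0 x u"
proof -
  note S_meas_K = measurable_is_rcd[OF K S_meas(1)] measurable_is_rcd[OF K S_meas(2)]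
  have nested_K: "Q 0 (X \<omega>) \<le> Q 1 (X \<omega>)" if "\<omega> \<in> space (K x u)" for \<omega>
    using nested that by (simp add: space_is_rcd[OF K])
  have pos: "0 < (\<integral>\<omega>. Ssel Q X V 0 \<omega> \<partial>K x u)"
    using mS_nonneg[of K Q X V 0 x u] m0 unfolding mS_def by linarith
  note bounds = nested_weights_mean_bounds_lower[OF finite_measure_is_rcd[OF K] S_meas_K
        Ssel_nested_weights[where Q = Q and X = X, OF nested_K] Y1 lower pos]
  show "c - mY K Q X V 0 Y0s x u / mS K Q X V 0 x u \<le> DeltaOO K Q X V Y0s Y1s x u"
    and "DeltaOO K Q X V Y0s Y1s x u
      \<le> (mY K Q X V 1 Y1s x u - c * (mS K Q X V 1 x u - mS K Q X V 0 x u)) / mS K Q X V 0 x u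
        - mY K Q X V 0 Y0s x u / mS K Q X V 0 x u"
    using bounds DeltaOO_nested_selection[where K = K and x = x and u = u and Q = Q and X = X,
        OF S_meas_K(1) nested_K Y0 Y1]
    by (simp_all add: mS_def mY_def)
qed

lemma DeltaOO_bounds_of_upper_bound:
  assumes K: "is_rcd M X SX U K"
    and S_meas: "Ssel Q X V 0 \<in> borel_measurable M" "Ssel Q X V 1 \<in> borel_measurable M"
    and nested: "\<And>\<omega>. \<omega> \<in> space M \<Longrightarrow> Q 0 (X \<omega>) \<le> Q 1 (X \<omega>)"
    and Y0: "integrable (K x u) Y0s" and Y1: "integrable (K x u) Y1s"
    and upper: "AE \<omega> in K x u. Y1s \<omega> \<le> C" and m0: "mS K Q X V 0 x u \<noteq> 0"
  shows "DeltaOO K Q X V Y0s Y1s x u \<le> C - mY K Q X V 0 Y0s x u / mS K Q X V 0 x u"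
    and "(mY K Q X V 1 Y1s x u - C * (mS K Q X V 1 x u - mS K Q X V 0 x u)) / mS K Q X V 0 x u
        - mY K Q X V 0 Y0s x u / mS K Q X V 0 x u \<le> DeltaOO K Q X V Y0s Y1s x u"
proof -
  note S_meas_K = measurable_is_rcd[OF K S_meas(1)] measurable_is_rcd[OF K S_meas(2)]
  have nested_K: "Q 0 (X \<omega>) \<le> Q 1 (X \<omega>)" if "\<omega> \<in> space (K x u)" for \<omega>
    using nested that by (simp add: space_is_rcd[OF K])
  have pos: "0 < (\<integral>\<omega>. Ssel Q X V 0 \<omega> \<partial>K x u)"
    using mS_nonneg[of K Q X V 0 x u] m0 unfolding mS_def by linarith
  note bounds = nested_weights_mean_bounds_upper[OF finite_measure_is_rcd[OF K] S_meas_K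
        Ssel_nested_weights[where Q = Q and X = X, OF nested_K] Y1 upper pos]
  show "DeltaOO K Q X V Y0s Y1s x u \<le> C - mY K Q X V 0 Y0s x u / mS K Q X V 0 x u"
    and "(mY K Q X V 1 Y1s x u - C * (mS K Q X V 1 x u - mS K Q X V 0 x u)) / mS K Q X V 0 x u
        - mY K Q X V 0 Y0s x u / mS K Q X V 0 x u \<le> DeltaOO K Q X V Y0s Y1s x u"
    using bounds DeltaOO_nested_selection[where K = K and x = x and u = u and Q = Q and X = X,
        OF S_meas_K(1) nested_K Y0 Y1]
    by (simp_all add: mS_def mY_def)
qed

theorem corollary1:
  fixes M :: "'a measure" and SX :: "'x measure" and SZ :: "'z measure"
    and X :: "'a \<Rightarrow> 'x" and Z :: "'a \<Rightarrow> 'z"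
    and U V Y0s Y1s :: "'a \<Rightarrow> real"
    and P :: "'x \<Rightarrow> 'z \<Rightarrow> real" and Q :: "nat \<Rightarrow> 'x \<Rightarrow> real"
    and K :: "'x \<Rightarrow> real \<Rightarrow> 'a measure"
    and Ystar :: "real set"
  assumes M: "prob_space M"
    and meas: "X \<in> measurable M SX" "Z \<in> measurable M SZ"
      "U \<in> borel_measurable M" "V \<in> borel_measurable M"
      "Y0s \<in> borel_measurable M" "Y1s \<in> borel_measurable M"
    and P_meas: "(\<lambda>(x, z). P x z) \<in> borel_measurable (SX \<Otimes>\<^sub>M SZ)"
    and P_range: "\<forall>x\<in>space SX. \<forall>z\<in>space SZ. P x z \<in> {0..1}"
    and Q_meas: "\<forall>d\<in>{0,1}. Q d \<in> borel_measurable SX"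
    and Q_range: "\<forall>d\<in>{0,1}. \<forall>x\<in>space SX. Q d x \<in> {0..1}"
    and UV_unif: "cond_uniform01 M X SX U" "cond_uniform01 M X SX V"
    and UV_cont: "cond_jointly_continuous M X SX U V"
    and A1: "cond_indep_given M X SX Z SZ (\<lambda>\<omega>. (U \<omega>, V \<omega>, Y0s \<omega>, Y1s \<omega>)) borel"
    and A2: "cond_nondegenerate M X SX (\<lambda>\<omega>. P (X \<omega>) (Z \<omega>))"
    and A3: "integrable M Y0s" "integrable M Y1s"
      "integrable M (\<lambda>\<omega>. (Y0s \<omega>)\<^sup>2)" "integrable M (\<lambda>\<omega>. (Y1s \<omega>)\<^sup>2)"
    and A4: "AE \<omega> in M. 0 < condE M X SX (Dtr P X Z U) \<omega> \<and> condE M X SX (Dtr P X Z U) \<omega> < 1"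
    and A6: "rv_support M Y0s = Ystar" "rv_support M Y1s = Ystar"
    and A8: "\<forall>x\<in>X ` space M. Q 1 x > Q 0 x \<and> Q 0 x > 0"
    and K: "is_rcd M X SX U K"
  shows "AE \<omega> in M.
    (let x = X \<omega>; u = U \<omega>;
         a = mY K Q X V 0 Y0s x u / mS K Q X V 0 x u;
         DS = mS K Q X V 1 x u - mS K Q X V 0 x u;
         D = DeltaOO K Q X V Y0s Y1s x u
     in mS K Q X V 0 x u \<noteq> 0 \<longrightarrow> pOO K Q X V x u \<noteq> 0 \<longrightarrow>
       ((bdd_below Ystar \<and> \<not> bdd_above Ystar \<and> is_interval Ystar \<longrightarrow>
           Inf Ystar - a \<le> D \<and>
           D \<le> (mY K Q X V 1 Y1s x u - Inf Ystar * DS) / mS K Q X V 0 x u - a) \<and>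
        (\<not> bdd_below Ystar \<and> bdd_above Ystar \<and> is_interval Ystar \<longrightarrow>
           (mY K Q X V 1 Y1s x u - Sup Ystar * DS) / mS K Q X V 0 x u - a \<le> D \<and>
           D \<le> Sup Ystar - a) \<and>
        (bdd_below Ystar \<and> bdd_above Ystar \<and>
           (is_interval Ystar \<or> (Inf Ystar \<in> Ystar \<and> Sup Ystar \<in> Ystar)) \<longrightarrow>
           max ((mY K Q X V 1 Y1s x u - Sup Ystar * DS) / mS K Q X V 0 x u) (Inf Ystar) - a \<le> D \<and>
           D \<le> min ((mY K Q X V 1 Y1s x u - Inf Ystar * DS) / mS K Q X V 0 x u) (Sup Ystar) - a)))"
proof -
  have nested: "Q 0 (X \<omega>) \<le> Q 1 (X \<omega>)" if "\<omega> \<in> space M" for \<omega>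
    using A8 that by force
  have S_meas: "Ssel Q X V 0 \<in> borel_measurable M" "Ssel Q X V 1 \<in> borel_measurable M"
    using Q_meas meas(1,4) by (auto intro: measurable_Ssel)
  note AE_is_rcd_rv_support[OF M meas(1,3) K meas(6), unfolded A6(2)]
    integrable_is_rcd[OF M meas(1,3) K A3(1)] integrable_is_rcd[OF M meas(1,3) K A3(2)]
  then show ?thesis
  proof eventually_elim
    case (elim \<omega>)
    have "AE \<omega>' in K (X \<omega>) (U \<omega>). Inf Ystar \<le> Y1s \<omega>'" if "bdd_below Ystar"
      using elim(1) by eventually_elim (simp add: cInf_lower that)
    note below = DeltaOO_bounds_of_lower_bound[OF K S_meas nested elim(2,3) this]
    have "AE \<omega>' in K (X \<omega>) (U \<omega>). Y1s \<omega>' \<le> Sup Ystar" if "bdd_above Ystar"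
      using elim(1) by eventually_elim (simp add: cSup_upper that)
    note above = DeltaOO_bounds_of_upper_bound[OF K S_meas nested elim(2,3) this]
    show ?case unfolding Let_def
      using below above by (auto simp: max.bounded_iff min.bounded_iff)
  qed
qed

end
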